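(* Let $0<p<1$. Every Schur $\mathcal{C}_p$-bounded pattern is a subset of a set of the form $(F\times\mathbb{N})\cup(\mathbb{N}\times F)$ for some finite $F\subseteq\mathbb{N}$.
   Context: $\mathcal{C}_p$ is the Schatten ideal of compact operators $A$ on $\ell_2(\mathbb{N})$ with $\|A\|_{\mathcal{C}_p}=(\sum_{k\ge0}\mu(k,A)^p)^{1/p}<\infty$, where $\mu(k,A)=\inf\{\|A-R\|_\infty:\mathrm{rank}(R)\le k\}$. For $m\in\ell_\infty(\mathbb{N}^2)$, $T_m(\{A_{j,k}\})=\{m(j,k)A_{j,k}\}$; $m$ is a bounded Schur multiplier of $\mathcal{C}_p$ if $\|T_m(A)\|_{\mathcal{C}_p}\le C_m\|A\|_{\mathcal{C}_p}$ for all finitely supported matrices $A$; $S\subseteq\mathbb{N}^2$ is a Schur $\mathcal{C}_p$-bounded pattern if every $m\in\ell_\infty(\mathbb{N}^2)$ supported on $S$ is a bounded Schur multiplier of $\mathcal{C}_p$. *)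

theory Defs
  imports "HOL-Analysis.Analysis"
begin

type_synonym cmatrix = "nat \<Rightarrow> nat \<Rightarrow> complex"

definition fin_supp_mat :: "cmatrix \<Rightarrow> bool" where
  "fin_supp_mat A \<longleftrightarrow> finite {(j, k). A j k \<noteq> 0}"

definition fin_supp_vec :: "(nat \<Rightarrow> complex) \<Rightarrow> bool" where
  "fin_supp_vec x \<longleftrightarrow> finite {l. x l \<noteq> 0}"

definition vnorm2 :: "(nat \<Rightarrow> complex) \<Rightarrow> real" where
  "vnorm2 x = (\<Sum>l\<in>{l. x l \<noteq> 0}. (cmod (x l))\<^sup>2)"

definition mat_apply :: "cmatrix \<Rightarrow> (nat \<Rightarrow> complex) \<Rightarrow> nat \<Rightarrow> complex" where
  "mat_apply A x j = (\<Sum>l\<in>{l. x l \<noteq> 0}. A j l * x l)"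

text \<open>Operator norm on \<open>\<ell>\<^sub>2(\<nat>)\<close> of a finitely supported matrix (finitely supported
  vectors are dense, so the supremum over them is the operator norm).\<close>
definition opnorm :: "cmatrix \<Rightarrow> real" where
  "opnorm A = Sup {sqrt (vnorm2 (mat_apply A x)) | x. fin_supp_vec x \<and> vnorm2 x \<le> 1}"

definition rank_le :: "cmatrix \<Rightarrow> nat \<Rightarrow> bool" where
  "rank_le R k \<longleftrightarrow> (\<exists>u v :: nat \<Rightarrow> nat \<Rightarrow> complex.
      \<forall>j l. R j l = (\<Sum>i<k. u i j * v i l))"

text \<open>Singular numbers \<open>\<mu>(k,A) = inf{\<parallel>A - R\<parallel> : rank R \<le> k}\<close>; for finitely supported A
  it suffices to let R range over finitely supported matrices.\<close>
definition sing_num :: "nat \<Rightarrow> cmatrix \<Rightarrow> real" where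
  "sing_num k A = Inf {opnorm (\<lambda>j l. A j l - R j l) | R. fin_supp_mat R \<and> rank_le R k}"

definition schatten_norm :: "real \<Rightarrow> cmatrix \<Rightarrow> real" where
  "schatten_norm p A = (\<Sum>k. sing_num k A powr p) powr (1 / p)"

definition schur_mult :: "cmatrix \<Rightarrow> cmatrix \<Rightarrow> cmatrix" where
  "schur_mult m A = (\<lambda>j k. m j k * A j k)"

definition bounded_fun :: "cmatrix \<Rightarrow> bool" where
  "bounded_fun m \<longleftrightarrow> (\<exists>B. \<forall>j k. cmod (m j k) \<le> B)"

definition bounded_schur_multiplier :: "real \<Rightarrow> cmatrix \<Rightarrow> bool" where
  "bounded_schur_multiplier p m \<longleftrightarrow>
     (\<exists>C. \<forall>A. fin_supp_mat A \<longrightarrow> schatten_norm p (schur_mult m A) \<le> C * schatten_norm p A)"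

definition schur_bounded_pattern :: "real \<Rightarrow> (nat \<times> nat) set \<Rightarrow> bool" where
  "schur_bounded_pattern p S \<longleftrightarrow>
     (\<forall>m. bounded_fun m \<and> (\<forall>j k. (j, k) \<notin> S \<longrightarrow> m j k = 0) \<longrightarrow> bounded_schur_multiplier p m)"

end

theory Submission
  imports Defs
begin

(* If S lies in no set (F \<times> \<nat>) \<union> (\<nat> \<times> F) with F finite, one can choose pairs (r i, c i) \<in> S,
   i \<in> \<nat>, with pairwise distinct rows and pairwise distinct columns. The 0/1 indicator m of
   these pairs is bounded and supported on S. On the n \<times> n all-ones block with rows r 0, ..., r (n-1)
   and columns c 0, ..., c (n-1), a rank-one matrix of operator norm n, the Schur multiplier m
   produces a partial permutation matrix. That matrix is isometric on an n-dimensional coordinate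
   subspace, which every operator of rank k < n annihilates in some unit vector; hence its n nonzero
   singular numbers are all 1 and its C_p-norm is n^(1/p). Boundedness of T_m would give
   n^(1/p) \<le> C n for all n, which fails because 1/p > 1. *)

lemma vnorm2_eq_sum:
  assumes "finite T" "{l. x l \<noteq> 0} \<subseteq> T"
  shows "vnorm2 x = (\<Sum>l\<in>T. (cmod (x l))\<^sup>2)"
  unfolding vnorm2_def by (rule sum.mono_neutral_left) (use assms in auto)

lemma mat_apply_eq_sum:
  assumes "finite T" "{l. x l \<noteq> 0} \<subseteq> T"
  shows "mat_apply A x j = (\<Sum>l\<in>T. A j l * x l)"
  unfolding mat_apply_def by (rule sum.mono_neutral_left) (use assms in auto)

lemma vnorm2_scale: "vnorm2 (\<lambda>l. a * x l) = (cmod a)\<^sup>2 * vnorm2 x"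
  by (cases "a = 0") (simp_all add: vnorm2_def norm_mult power_mult_distrib sum_distrib_left)

lemma vnorm2_zero [simp]: "vnorm2 (\<lambda>_. 0) = 0"
  unfolding vnorm2_def by simp

lemma mat_apply_diff:
  "mat_apply (\<lambda>j l. A j l - R j l) x j = mat_apply A x j - mat_apply R x j"
  unfolding mat_apply_def by (simp add: algebra_simps sum_subtractf)

lemma fin_supp_vec_zero: "fin_supp_vec (\<lambda>_. 0)"
  unfolding fin_supp_vec_def by simp

lemma fin_supp_mat_zero: "fin_supp_mat (\<lambda>_ _. 0)"
  unfolding fin_supp_mat_def by simp

lemma fin_supp_mat_diff:
  assumes "fin_supp_mat A" "fin_supp_mat R"
  shows "fin_supp_mat (\<lambda>j l. A j l - R j l)"
proof -
  have "{(j, l). A j l - R j l \<noteq> 0} \<subseteq> {(j, l). A j l \<noteq> 0} \<union> {(j, l). R j l \<noteq> 0}"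
    by auto
  then show ?thesis
    using assms unfolding fin_supp_mat_def by (meson finite_UnI finite_subset)
qed

lemma cmod_sum_mult_le:
  assumes "finite T"
  shows "(cmod (\<Sum>l\<in>T. a l * x l))\<^sup>2 \<le> (\<Sum>l\<in>T. (cmod (a l))\<^sup>2) * (\<Sum>l\<in>T. (cmod (x l))\<^sup>2)"
proof -
  have "cmod (\<Sum>l\<in>T. a l * x l) \<le> (\<Sum>l\<in>T. \<bar>cmod (a l)\<bar> * \<bar>cmod (x l)\<bar>)"
    by (rule order_trans[OF norm_sum]) (simp add: norm_mult)
  also have "\<dots> \<le> L2_set (\<lambda>l. cmod (a l)) T * L2_set (\<lambda>l. cmod (x l)) T"
    by (rule L2_set_mult_ineq)
  finally have "(cmod (\<Sum>l\<in>T. a l * x l))\<^sup>2 \<le> (L2_set (\<lambda>l. cmod (a l)) T * L2_set (\<lambda>l. cmod (x l)) T)\<^sup>2"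
    by (rule power_mono) simp
  then show ?thesis
    by (simp add: power_mult_distrib L2_set_def sum_nonneg)
qed

definition hs_norm2 :: "cmatrix \<Rightarrow> real" where
  "hs_norm2 A = (\<Sum>(j, l)\<in>{(j, l). A j l \<noteq> 0}. (cmod (A j l))\<^sup>2)"

lemma hs_norm2_nonneg: "0 \<le> hs_norm2 A"
  unfolding hs_norm2_def by (rule sum_nonneg) auto

lemma vnorm2_mat_apply_le:
  assumes "fin_supp_mat A" "fin_supp_vec x"
  shows "vnorm2 (mat_apply A x) \<le> hs_norm2 A * vnorm2 x"
proof -
  define SA where "SA = {(j, l). A j l \<noteq> 0}"
  define J where "J = fst ` SA"
  define T where "T = {l. x l \<noteq> 0} \<union> snd ` SA"
  have fin: "finite SA" "finite J" "finite T"
    using assms unfolding SA_def J_def T_def fin_supp_mat_def fin_supp_vec_def by auto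
  have "A j l = 0" if "j \<notin> J \<or> l \<notin> T" for j l
    using that unfolding J_def T_def SA_def by force
  then have SA_sub: "SA \<subseteq> J \<times> T" and row_zero: "\<And>j l. j \<notin> J \<Longrightarrow> A j l = 0"
    unfolding SA_def by auto
  have x_sum: "vnorm2 x = (\<Sum>l\<in>T. (cmod (x l))\<^sup>2)"
    by (rule vnorm2_eq_sum) (use fin in \<open>auto simp: T_def\<close>)
  have Ax: "mat_apply A x j = (\<Sum>l\<in>T. A j l * x l)" for j
    by (rule mat_apply_eq_sum) (use fin in \<open>auto simp: T_def\<close>)
  have "mat_apply A x j = 0" if "j \<notin> J" for j
    using row_zero[OF that] by (simp add: Ax)
  then have "{j. mat_apply A x j \<noteq> 0} \<subseteq> J"
    by blast
  then have "vnorm2 (mat_apply A x) = (\<Sum>j\<in>J. (cmod (mat_apply A x j))\<^sup>2)"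
    by (rule vnorm2_eq_sum[OF fin(2)])
  also have "\<dots> \<le> (\<Sum>j\<in>J. (\<Sum>l\<in>T. (cmod (A j l))\<^sup>2) * vnorm2 x)"
    unfolding Ax x_sum
    by (rule sum_mono) (rule cmod_sum_mult_le[OF fin(3)])
  also have "\<dots> = (\<Sum>(j, l)\<in>J \<times> T. (cmod (A j l))\<^sup>2) * vnorm2 x"
    by (simp add: sum_distrib_right sum.cartesian_product split_def)
  also have "(\<Sum>(j, l)\<in>J \<times> T. (cmod (A j l))\<^sup>2) = hs_norm2 A"
    unfolding hs_norm2_def SA_def[symmetric]
    by (rule sum.mono_neutral_left[symmetric]) (use fin SA_sub in \<open>auto simp: SA_def\<close>)
  finally show ?thesis .
qed

lemma bdd_above_opnorm_set:
  assumes "fin_supp_mat A"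
  shows "bdd_above {sqrt (vnorm2 (mat_apply A x)) | x. fin_supp_vec x \<and> vnorm2 x \<le> 1}"
proof (rule bdd_aboveI)
  fix s assume "s \<in> {sqrt (vnorm2 (mat_apply A x)) | x. fin_supp_vec x \<and> vnorm2 x \<le> 1}"
  then obtain x where x: "fin_supp_vec x" "vnorm2 x \<le> 1" and s: "s = sqrt (vnorm2 (mat_apply A x))"
    by blast
  have "hs_norm2 A * vnorm2 x \<le> hs_norm2 A"
    using x(2) hs_norm2_nonneg by (rule mult_left_le)
  then show "s \<le> sqrt (hs_norm2 A)"
    unfolding s using vnorm2_mat_apply_le[OF assms x(1)] by simp
qed

lemma opnorm_ge:
  assumes "fin_supp_mat A" "fin_supp_vec x" "vnorm2 x \<le> 1"
  shows "sqrt (vnorm2 (mat_apply A x)) \<le> opnorm A"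
  unfolding opnorm_def
  by (rule cSup_upper[OF _ bdd_above_opnorm_set[OF assms(1)]]) (use assms in auto)

lemma opnorm_leI:
  assumes "\<And>x. fin_supp_vec x \<Longrightarrow> vnorm2 x \<le> 1 \<Longrightarrow> sqrt (vnorm2 (mat_apply A x)) \<le> c"
  shows "opnorm A \<le> c"
  unfolding opnorm_def
proof (rule cSup_least)
  show "{sqrt (vnorm2 (mat_apply A x)) | x. fin_supp_vec x \<and> vnorm2 x \<le> 1} \<noteq> {}"
    using fin_supp_vec_zero by fastforce
qed (use assms in blast)

lemma opnorm_nonneg:
  assumes "fin_supp_mat A"
  shows "0 \<le> opnorm A"
proof -
  have "mat_apply A (\<lambda>_. 0) = (\<lambda>_. 0)"
    unfolding mat_apply_def by simp
  then show ?thesis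
    using opnorm_ge[OF assms fin_supp_vec_zero] by simp
qed

lemma opnorm_le_hs_norm:
  assumes "fin_supp_mat A"
  shows "opnorm A \<le> sqrt (hs_norm2 A)"
proof (rule opnorm_leI)
  fix x assume x: "fin_supp_vec x" "vnorm2 x \<le> 1"
  have "vnorm2 (mat_apply A x) \<le> hs_norm2 A"
    using vnorm2_mat_apply_le[OF assms x(1)] mult_left_le[OF x(2) hs_norm2_nonneg[of A]]
    by linarith
  then show "sqrt (vnorm2 (mat_apply A x)) \<le> sqrt (hs_norm2 A)"
    by simp
qed

lemma rank_le_zero: "rank_le (\<lambda>_ _. 0) 0"
  unfolding rank_le_def by simp

lemma rank_le_mono:
  assumes "rank_le R k" "k \<le> k'"
  shows "rank_le R k'"
proof -
  obtain u v where uv: "\<And>j l. R j l = (\<Sum>i<k. u i j * v i l)"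
    using assms(1) unfolding rank_le_def by blast
  define u' where "u' i j = (if i < k then u i j else 0)" for i j
  have "R j l = (\<Sum>i<k'. u' i j * v i l)" for j l
    unfolding uv using assms(2)
    by (intro sum.mono_neutral_cong_left) (auto simp: u'_def)
  then show ?thesis
    unfolding rank_le_def by blast
qed

lemma sing_num_set_nonempty:
  "{opnorm (\<lambda>j l. A j l - R j l) | R. fin_supp_mat R \<and> rank_le R k} \<noteq> {}"
  using fin_supp_mat_zero rank_le_mono[OF rank_le_zero, of k] by blast

lemma sing_num_nonneg:
  assumes "fin_supp_mat A"
  shows "0 \<le> sing_num k A"
  unfolding sing_num_def
  by (rule cInf_greatest[OF sing_num_set_nonempty]) (use opnorm_nonneg fin_supp_mat_diff assms in blast)

lemma sing_num_le_opnorm_diff: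
  assumes "fin_supp_mat A" "fin_supp_mat R" "rank_le R k"
  shows "sing_num k A \<le> opnorm (\<lambda>j l. A j l - R j l)"
  unfolding sing_num_def
proof (rule cInf_lower)
  show "bdd_below {opnorm (\<lambda>j l. A j l - R j l) | R. fin_supp_mat R \<and> rank_le R k}"
    by (rule bdd_belowI[of _ 0]) (use opnorm_nonneg fin_supp_mat_diff assms(1) in blast)
qed (use assms in blast)

lemma sing_num_geI:
  assumes "\<And>R. fin_supp_mat R \<Longrightarrow> rank_le R k \<Longrightarrow> c \<le> opnorm (\<lambda>j l. A j l - R j l)"
  shows "c \<le> sing_num k A"
  unfolding sing_num_def
  by (rule cInf_greatest[OF sing_num_set_nonempty]) (use assms in blast)

lemma sing_num_eq_0_if_rank_le:
  assumes "fin_supp_mat A" "rank_le A k"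
  shows "sing_num k A = 0"
proof -
  have "hs_norm2 (\<lambda>j l. A j l - A j l) = 0"
    by (simp add: hs_norm2_def)
  then have "sing_num k A \<le> 0"
    using sing_num_le_opnorm_diff[OF assms(1,1,2)] opnorm_le_hs_norm[OF fin_supp_mat_diff[OF assms(1,1)]]
    by simp
  then show ?thesis
    using sing_num_nonneg[OF assms(1), of k] by simp
qed

lemma schatten_norm_finite_rank:
  assumes "fin_supp_mat A" "rank_le A k"
  shows "schatten_norm p A = (\<Sum>i<k. sing_num i A powr p) powr (1 / p)"
proof -
  have "sing_num i A = 0" if "i \<notin> {..<k}" for i
    using that by (intro sing_num_eq_0_if_rank_le[OF assms(1) rank_le_mono[OF assms(2)]]) auto
  then have "(\<Sum>i. sing_num i A powr p) = (\<Sum>i<k. sing_num i A powr p)"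
    by (intro suminf_finite) auto
  then show ?thesis
    unfolding schatten_norm_def by simp
qed

lemma schatten_norm_rank_one_le:
  assumes "fin_supp_mat A" "rank_le A 1" "0 < p"
  shows "schatten_norm p A \<le> opnorm A"
proof -
  have "schatten_norm p A = sing_num 0 A"
    using schatten_norm_finite_rank[OF assms(1,2)] sing_num_nonneg[OF assms(1)] assms(3)
    by (simp add: powr_powr)
  also have "\<dots> \<le> opnorm (\<lambda>j l. A j l - 0)"
    by (rule sing_num_le_opnorm_diff[OF assms(1) fin_supp_mat_zero rank_le_zero])
  finally show ?thesis
    by simp
qed

lemma schatten_norm_ge_if_sing_num_ge_1:
  assumes "fin_supp_mat A" "rank_le A n" "0 < p" "\<And>k. k < n \<Longrightarrow> 1 \<le> sing_num k A"
  shows "real n powr (1 / p) \<le> schatten_norm p A"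
proof -
  have "real n = (\<Sum>k<n. 1 powr p)"
    by simp
  also have "\<dots> \<le> (\<Sum>k<n. sing_num k A powr p)"
    using assms(3,4) by (intro sum_mono powr_mono2) auto
  finally show ?thesis
    unfolding schatten_norm_finite_rank[OF assms(1,2)] using assms(3) by (intro powr_mono2) auto
qed

lemma homogeneous_system_nontrivial_solution:
  fixes v :: "nat \<Rightarrow> nat \<Rightarrow> complex"
  assumes "finite L" "k < card L"
  shows "\<exists>y. (\<forall>l. l \<notin> L \<longrightarrow> y l = 0) \<and> (\<exists>l\<in>L. y l \<noteq> 0) \<and> (\<forall>i<k. (\<Sum>l\<in>L. v i l * y l) = 0)"
  using assms
proof (induction k arbitrary: L)
  case 0
  then obtain l0 where "l0 \<in> L"
    by fastforce
  then show ?case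
    by (intro exI[of _ "\<lambda>l. if l = l0 then 1 else 0"]) auto
next
  case (Suc k)
  \<comment> \<open>Two solutions of the first \<open>k\<close> equations, independent because only the first is
    nonzero at \<open>l1\<close>; a combination of them also solves equation \<open>k\<close>.\<close>
  obtain y1 l1 where y1: "\<forall>l. l \<notin> L \<longrightarrow> y1 l = 0" "l1 \<in> L" "y1 l1 \<noteq> 0"
      "\<forall>i<k. (\<Sum>l\<in>L. v i l * y1 l) = 0"
    using Suc.IH[OF Suc.prems(1)] Suc.prems(2) by auto
  have "k < card (L - {l1})"
    using Suc.prems y1(2) by simp
  then obtain y2 where y2: "\<forall>l. l \<notin> L - {l1} \<longrightarrow> y2 l = 0" "\<exists>l\<in>L - {l1}. y2 l \<noteq> 0"
      "\<forall>i<k. (\<Sum>l\<in>L - {l1}. v i l * y2 l) = 0"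
    using Suc.IH[of "L - {l1}"] Suc.prems(1) by blast
  have sum_y2: "(\<Sum>l\<in>L. v i l * y2 l) = (\<Sum>l\<in>L - {l1}. v i l * y2 l)" for i
    using Suc.prems(1) y1(2) y2(1) by (simp add: sum.remove)
  define f where "f y = (\<Sum>l\<in>L. v k l * y l)" for y
  show ?case
  proof (cases "f y2 = 0")
    case True
    then show ?thesis
      using y2 sum_y2 by (intro exI[of _ y2]) (auto simp: f_def less_Suc_eq)
  next
    case False
    define y where "y l = f y2 * y1 l - f y1 * y2 l" for l
    have "(\<Sum>l\<in>L. v i l * y l) = f y2 * (\<Sum>l\<in>L. v i l * y1 l) - f y1 * (\<Sum>l\<in>L. v i l * y2 l)" for i
      unfolding y_def by (simp add: algebra_simps sum_subtractf sum_distrib_left)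
    then have "\<forall>i<Suc k. (\<Sum>l\<in>L. v i l * y l) = 0"
      using y1(4) y2(3) sum_y2 by (auto simp: less_Suc_eq f_def)
    moreover have "y l1 \<noteq> 0"
      using False y1(3) y2(1) by (simp add: y_def)
    moreover have "\<forall>l. l \<notin> L \<longrightarrow> y l = 0"
      using y1(1) y2(1) by (simp add: y_def)
    ultimately show ?thesis
      using y1(2) by blast
  qed
qed

lemma unit_vector_in_kernel_of_rank_le:
  assumes "rank_le R k" "finite K" "k < card K"
  obtains x where "{l. x l \<noteq> 0} \<subseteq> K" "vnorm2 x = 1" "\<And>j. mat_apply R x j = 0"
proof -
  obtain u v where uv: "\<And>j l. R j l = (\<Sum>i<k. u i j * v i l)"
    using assms(1) unfolding rank_le_def by blast
  obtain y l0 where y: "{l. y l \<noteq> 0} \<subseteq> K" "l0 \<in> K" "y l0 \<noteq> 0"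
      "\<And>i. i < k \<Longrightarrow> (\<Sum>l\<in>K. v i l * y l) = 0"
    using homogeneous_system_nontrivial_solution[OF assms(2,3), of v] by blast
  define t where "t = vnorm2 y"
  have "0 < (cmod (y l0))\<^sup>2"
    using y(3) by simp
  also have "\<dots> \<le> t"
    unfolding t_def vnorm2_eq_sum[OF assms(2) y(1)] by (rule member_le_sum) (use assms(2) y(2) in auto)
  finally have "0 < t" .
  define x where "x l = complex_of_real (1 / sqrt t) * y l" for l
  have supp: "{l. x l \<noteq> 0} \<subseteq> K"
    using y(1) by (auto simp: x_def)
  have "vnorm2 x = 1"
    unfolding x_def vnorm2_scale using \<open>0 < t\<close> by (simp add: t_def norm_divide power_divide)
  moreover have "mat_apply R x j = 0" for j
  proof -
    have "mat_apply R x j = (\<Sum>l\<in>K. (\<Sum>i<k. u i j * v i l) * x l)"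
      unfolding uv by (rule mat_apply_eq_sum[OF assms(2) supp])
    also have "\<dots> = (\<Sum>i<k. \<Sum>l\<in>K. u i j * v i l * x l)"
      by (subst sum.swap) (simp add: sum_distrib_right)
    also have "\<dots> = (\<Sum>i<k. u i j * complex_of_real (1 / sqrt t) * (\<Sum>l\<in>K. v i l * y l))"
      by (simp add: x_def sum_distrib_left mult_ac)
    also have "\<dots> = 0"
      using y(4) by simp
    finally show ?thesis .
  qed
  ultimately show ?thesis
    using that supp by blast
qed

lemma one_le_sing_num_if_isometric_on:
  assumes "fin_supp_mat A" "finite K" "k < card K"
    and "\<And>x. {l. x l \<noteq> 0} \<subseteq> K \<Longrightarrow> vnorm2 (mat_apply A x) = vnorm2 x"
  shows "1 \<le> sing_num k A"
proof (rule sing_num_geI)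
  fix R assume R: "fin_supp_mat R" "rank_le R k"
  obtain x where x: "{l. x l \<noteq> 0} \<subseteq> K" "vnorm2 x = 1" "\<And>j. mat_apply R x j = 0"
    using unit_vector_in_kernel_of_rank_le[OF R(2) assms(2,3)] by blast
  have "fin_supp_vec x"
    using x(1) assms(2) finite_subset unfolding fin_supp_vec_def by blast
  moreover have "mat_apply (\<lambda>j l. A j l - R j l) x = mat_apply A x"
    using x(3) by (simp add: fun_eq_iff mat_apply_diff)
  ultimately show "1 \<le> opnorm (\<lambda>j l. A j l - R j l)"
    using opnorm_ge[OF fin_supp_mat_diff[OF assms(1) R(1)], of x] assms(4)[OF x(1)] x(2) by simp
qed

definition ones_block :: "nat set \<Rightarrow> nat set \<Rightarrow> cmatrix" where
  "ones_block J K = (\<lambda>j l. if j \<in> J \<and> l \<in> K then 1 else 0)"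

definition partial_perm :: "(nat \<Rightarrow> nat) \<Rightarrow> (nat \<Rightarrow> nat) \<Rightarrow> nat \<Rightarrow> cmatrix" where
  "partial_perm r c n = (\<lambda>j l. if \<exists>i<n. j = r i \<and> l = c i then 1 else 0)"

lemma support_ones_block: "{(j, l). ones_block J K j l \<noteq> 0} = J \<times> K"
  by (auto simp: ones_block_def)

lemma fin_supp_ones_block:
  assumes "finite J" "finite K"
  shows "fin_supp_mat (ones_block J K)"
  unfolding fin_supp_mat_def support_ones_block using assms by simp

lemma rank_le_ones_block: "rank_le (ones_block J K) 1"
  unfolding rank_le_def ones_block_def
  by (rule exI[of _ "\<lambda>_ j. if j \<in> J then 1 else 0"], rule exI[of _ "\<lambda>_ l. if l \<in> K then 1 else 0"]) simp

lemma schatten_norm_ones_block_le: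
  assumes "finite J" "finite K" "0 < p"
  shows "schatten_norm p (ones_block J K) \<le> sqrt (real (card J * card K))"
proof -
  have "hs_norm2 (ones_block J K) = (\<Sum>_\<in>J \<times> K. 1)"
    unfolding hs_norm2_def support_ones_block by (rule sum.cong) (auto simp: ones_block_def)
  then show ?thesis
    using schatten_norm_rank_one_le[OF fin_supp_ones_block[OF assms(1,2)] rank_le_ones_block assms(3)]
      opnorm_le_hs_norm[OF fin_supp_ones_block[OF assms(1,2)]]
    by (simp add: card_cartesian_product)
qed

lemma fin_supp_partial_perm: "fin_supp_mat (partial_perm r c n)"
proof -
  have "{(j, l). partial_perm r c n j l \<noteq> 0} \<subseteq> r ` {..<n} \<times> c ` {..<n}"
    by (auto simp: partial_perm_def split: if_splits)
  then show ?thesis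
    unfolding fin_supp_mat_def by (rule finite_subset) simp
qed

lemma partial_perm_row:
  assumes "inj r" "i < n"
  shows "partial_perm r c n (r i) l = (if l = c i then 1 else 0)"
  using assms by (auto simp: partial_perm_def dest: injD)

lemma partial_perm_outside_rows:
  assumes "j \<notin> r ` {..<n}"
  shows "partial_perm r c n j l = 0"
  using assms by (auto simp: partial_perm_def)

lemma rank_le_partial_perm:
  assumes "inj r"
  shows "rank_le (partial_perm r c n) n"
proof -
  have "partial_perm r c n j l = (\<Sum>i<n. (if j = r i then 1 else 0) * (if l = c i then 1 else 0))" for j l
  proof (cases "j \<in> r ` {..<n}")
    case True
    then obtain i0 where i0: "i0 < n" "j = r i0"
      by blast
    then have "(\<Sum>i<n. (if j = r i then 1 else 0) * (if l = c i then 1 else 0))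
        = (\<Sum>i<n. if i = i0 then (if l = c i0 then 1 else 0) else (0::complex))"
      using assms by (intro sum.cong) (auto dest: injD)
    then show ?thesis
      using i0 partial_perm_row[OF assms] by simp
  next
    case False
    then have "(\<Sum>i<n. (if j = r i then 1 else 0) * (if l = c i then 1 else 0)) = (0::complex)"
      by (intro sum.neutral) auto
    then show ?thesis
      using partial_perm_outside_rows[OF False] by simp
  qed
  then show ?thesis
    unfolding rank_le_def
    by (intro exI[of _ "\<lambda>i j. if j = r i then 1 else 0"] exI[of _ "\<lambda>i l. if l = c i then 1 else 0"]) blast
qed

lemma vnorm2_mat_apply_partial_perm:
  assumes "inj r" "inj c" "{l. x l \<noteq> 0} \<subseteq> c ` {..<n}"
  shows "vnorm2 (mat_apply (partial_perm r c n) x) = vnorm2 x"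
proof -
  let ?y = "mat_apply (partial_perm r c n) x"
  have y_row: "?y (r i) = x (c i)" if "i < n" for i
  proof -
    have "?y (r i) = (\<Sum>l\<in>c ` {..<n}. partial_perm r c n (r i) l * x l)"
      by (rule mat_apply_eq_sum[OF _ assms(3)]) simp
    also have "\<dots> = (\<Sum>l\<in>c ` {..<n}. if l = c i then x l else 0)"
      using partial_perm_row[OF assms(1) that] by (intro sum.cong) auto
    also have "\<dots> = x (c i)"
      using that by simp
    finally show ?thesis .
  qed
  have "?y j = 0" if "j \<notin> r ` {..<n}" for j
    unfolding mat_apply_def using partial_perm_outside_rows[OF that] by simp
  then have "{j. ?y j \<noteq> 0} \<subseteq> r ` {..<n}"
    by blast
  then have "vnorm2 ?y = (\<Sum>j\<in>r ` {..<n}. (cmod (?y j))\<^sup>2)"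
    by (rule vnorm2_eq_sum[rotated]) simp
  also have "\<dots> = (\<Sum>i<n. (cmod (x (c i)))\<^sup>2)"
    using assms(1) by (simp add: sum.reindex inj_on_subset y_row)
  also have "\<dots> = (\<Sum>l\<in>c ` {..<n}. (cmod (x l))\<^sup>2)"
    using assms(2) by (simp add: sum.reindex inj_on_subset)
  also have "\<dots> = vnorm2 x"
    by (rule vnorm2_eq_sum[symmetric]) (use assms(3) in auto)
  finally show ?thesis .
qed

lemma schatten_norm_partial_perm_ge:
  assumes "inj r" "inj c" "0 < p"
  shows "real n powr (1 / p) \<le> schatten_norm p (partial_perm r c n)"
proof (rule schatten_norm_ge_if_sing_num_ge_1[OF fin_supp_partial_perm rank_le_partial_perm[OF assms(1)] assms(3)])
  fix k assume "k < n"
  then show "1 \<le> sing_num k (partial_perm r c n)"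
    using assms(2) vnorm2_mat_apply_partial_perm[OF assms(1,2)]
    by (intro one_le_sing_num_if_isometric_on[OF fin_supp_partial_perm, of "c ` {..<n}"])
       (auto simp: card_image inj_on_subset)
qed

lemma ex_nat_linear_less_powr:
  fixes C a :: real
  assumes "1 < a"
  obtains n :: nat where "C * real n < real n powr a"
proof -
  obtain n :: nat where n: "max 1 C powr (1 / (a - 1)) < real n"
    using reals_Archimedean2 by blast
  have "0 < real n"
    using n powr_ge_zero[of "max 1 C" "1 / (a - 1)"] by linarith
  have "C \<le> (max 1 C powr (1 / (a - 1))) powr (a - 1)"
    using assms by (simp add: powr_powr)
  also have "\<dots> < real n powr (a - 1)"
    using assms n by (intro powr_less_mono2) auto
  finally have "C * real n < real n powr (a - 1) * real n"
    using \<open>0 < real n\<close> by simp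
  also have "\<dots> = real n powr a"
    using \<open>0 < real n\<close> by (simp add: powr_diff)
  finally show ?thesis
    by (rule that)
qed

lemma schur_mult_graph_ones_block:
  assumes "inj r" "inj c"
  shows "schur_mult (\<lambda>j l. if \<exists>i. j = r i \<and> l = c i then 1 else 0) (ones_block (r ` {..<n}) (c ` {..<n}))
    = partial_perm r c n"
  using assms unfolding schur_mult_def ones_block_def partial_perm_def
  by (intro ext) (auto dest: injD)

lemma not_schur_bounded_pattern_if_inj_pairs:
  fixes r c :: "nat \<Rightarrow> nat"
  assumes "0 < p" "p < 1" "inj r" "inj c" "\<And>i. (r i, c i) \<in> S"
  shows "\<not> schur_bounded_pattern p S"
proof
  assume "schur_bounded_pattern p S"
  define m :: cmatrix where "m = (\<lambda>j l. if \<exists>i. j = r i \<and> l = c i then 1 else 0)"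
  have "bounded_fun m"
    unfolding bounded_fun_def m_def by (rule exI[of _ 1]) simp
  moreover have "\<forall>j l. (j, l) \<notin> S \<longrightarrow> m j l = 0"
    using assms(5) by (auto simp: m_def)
  ultimately have "bounded_schur_multiplier p m"
    using \<open>schur_bounded_pattern p S\<close> unfolding schur_bounded_pattern_def by blast
  then obtain C where C: "\<And>A. fin_supp_mat A \<Longrightarrow> schatten_norm p (schur_mult m A) \<le> C * schatten_norm p A"
    unfolding bounded_schur_multiplier_def by blast
  have growth: "real n powr (1 / p) \<le> \<bar>C\<bar> * real n" for n
  proof -
    let ?B = "ones_block (r ` {..<n}) (c ` {..<n})"
    have "card (r ` {..<n}) = n" "card (c ` {..<n}) = n"
      using assms(3,4) by (simp_all add: card_image inj_on_subset)
    then have B_le: "schatten_norm p ?B \<le> real n"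
      using schatten_norm_ones_block_le[of "r ` {..<n}" "c ` {..<n}", OF _ _ assms(1)] by simp
    have "real n powr (1 / p) \<le> schatten_norm p (schur_mult m ?B)"
      unfolding m_def schur_mult_graph_ones_block[OF assms(3,4)]
      by (rule schatten_norm_partial_perm_ge[OF assms(3,4,1)])
    also have "\<dots> \<le> C * schatten_norm p ?B"
      by (rule C) (simp add: fin_supp_ones_block)
    also have "\<dots> \<le> \<bar>C\<bar> * schatten_norm p ?B"
      by (intro mult_right_mono) (simp_all add: schatten_norm_def)
    also have "\<dots> \<le> \<bar>C\<bar> * real n"
      using B_le by (intro mult_left_mono) simp_all
    finally show ?thesis .
  qed
  have "1 < 1 / p"
    using assms(1,2) by simp
  then obtain n :: nat where "\<bar>C\<bar> * real n < real n powr (1 / p)"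
    by (rule ex_nat_linear_less_powr)
  with growth[of n] show False
    by simp
qed

lemma inj_pairs_if_not_covered:
  assumes "\<And>F. finite F \<Longrightarrow> \<not> S \<subseteq> (F \<times> UNIV) \<union> (UNIV \<times> F)"
  obtains r c :: "nat \<Rightarrow> nat" where "inj r" "inj c" "\<And>i. (r i, c i) \<in> S"
proof -
  define g where "g F = (SOME z. z \<in> S \<and> fst z \<notin> F \<and> snd z \<notin> F)" for F
  have g: "g F \<in> S \<and> fst (g F) \<notin> F \<and> snd (g F) \<notin> F" if "finite F" for F
  proof -
    have "\<exists>z. z \<in> S \<and> fst z \<notin> F \<and> snd z \<notin> F"
      using assms[OF that] by fastforce
    then show ?thesis
      unfolding g_def by (rule someI_ex)
  qed
  define U where "U = rec_nat {} (\<lambda>_ V. V \<union> {fst (g V), snd (g V)})"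
  have U_simps: "U 0 = {}" "U (Suc i) = U i \<union> {fst (g (U i)), snd (g (U i))}" for i
    by (simp_all add: U_def)
  have U_finite: "finite (U i)" for i
    by (induction i) (simp_all add: U_simps)
  have U_mono: "U i \<subseteq> U j" if "i \<le> j" for i j
    using that by (induction j) (auto simp: U_simps le_Suc_eq)
  define r where "r i = fst (g (U i))" for i
  define c where "c i = snd (g (U i))" for i
  have fresh: "r j \<notin> U j" "c j \<notin> U j" for j
    using g[OF U_finite] by (simp_all add: r_def c_def)
  have used: "r i \<in> U j" "c i \<in> U j" if "i < j" for i j
    using U_mono[of "Suc i" j] that by (auto simp: U_simps r_def c_def)
  have "r i \<noteq> r j" "c i \<noteq> c j" if "i < j" for i j
    using used[OF that] fresh[of j] by auto
  then have "inj r" "inj c"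
    by (auto intro: linorder_injI)
  moreover have "(r i, c i) \<in> S" for i
    using g[OF U_finite] by (simp add: r_def c_def)
  ultimately show ?thesis
    by (rule that)
qed

theorem mainTheorem3:
  fixes p :: real and S :: "(nat \<times> nat) set"
  assumes "0 < p" and "p < 1"
    and "schur_bounded_pattern p S"
  shows "\<exists>F :: nat set. finite F \<and> S \<subseteq> (F \<times> UNIV) \<union> (UNIV \<times> F)"
proof (rule ccontr)
  assume uncovered: "\<nexists>F. finite F \<and> S \<subseteq> (F \<times> UNIV) \<union> (UNIV \<times> F)"
  have no_cover: "\<not> S \<subseteq> (F \<times> UNIV) \<union> (UNIV \<times> F)" if "finite F" for F
    using uncovered that by blast
  obtain r c :: "nat \<Rightarrow> nat" where "inj r" "inj c" "\<And>i. (r i, c i) \<in> S"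
    using inj_pairs_if_not_covered[OF no_cover] by blast
  then have "\<not> schur_bounded_pattern p S"
    by (rule not_schur_bounded_pattern_if_inj_pairs[OF assms(1,2)])
  then show False
    using assms(3) by contradiction
qed

end
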